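(* Let $\Pi\subset\mathbb R^2$ be a convex polygon with counterclockwise extreme points $\mathbf v_1,\dots,\mathbf v_n$. For $\mathbf x\in\Pi$ let $D(\mathbf x)\in\mathbb R^{n-1}$ be the G$-$W discrepancy vector with $i$-th coordinate $q(\mathbf x,\mathbf v_i)-w(\mathbf x,\mathbf v_i)$ for $1\le i<n$, where $q$ denotes Gibbs coordinates and $w$ Wachspress coordinates. Then there is a linear subspace of $\mathbb R^{n-1}$ of dimension $n-3$ containing $D(\mathbf x)$ for every $\mathbf x\in\Pi$.
   Context: Gibbs coordinates of $\mathbf x$: the unique probability distribution $(q(\mathbf x,\mathbf v_i))_i$ with $\sum_i q(\mathbf x,\mathbf v_i)\mathbf v_i=\mathbf x$ maximizing the entropy $-\sum_i q\log q$ ($0\log0=0$). Wachspress coordinates: with $A(\mathbf p,\mathbf q,\mathbf r)=\tfrac12\det[\mathbf q-\mathbf p,\mathbf r-\mathbf p]$ and indices mod $n$, for interior $\mathbf x$ set $w_i(\mathbf x)=A(\mathbf v_{i-1},\mathbf v_i,\mathbf v_{i+1})/(A(\mathbf v_{i-1},\mathbf v_i,\mathbf x)A(\mathbf x,\mathbf v_i,\mathbf v_{i+1}))$ and $w(\mathbf x,\mathbf v_i)=w_i(\mathbf x)/\sum_jw_j(\mathbf x)$; for $\mathbf x$ on an edge $[\mathbf v_j,\mathbf v_{j+1}]$ they are the barycentric coordinates of $\mathbf x$ with respect to $\mathbf v_j,\mathbf v_{j+1}$ and $0$ elsewhere. Both systems satisfy $\sum_i c_i\mathbf v_i=\mathbf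 x$, $\sum_ic_i=1$. *)

theory Defs
  imports "HOL-Analysis.Analysis" "HOL-Library.Function_Algebras"
begin

(* Real vector space structure on functions (pointwise); used to model R^(n-1)
   as the functions nat => real supported on {..<n-1}. *)
instantiation "fun" :: (type, real_vector) real_vector
begin
definition scaleR_fun :: "real \<Rightarrow> ('a \<Rightarrow> 'b) \<Rightarrow> 'a \<Rightarrow> 'b"
  where "scaleR_fun r f = (\<lambda>x. r *\<^sub>R f x)"
instance
  by standard (auto simp: scaleR_fun_def fun_eq_iff plus_fun_def fun_diff_def fun_Compl_def zero_fun_def scaleR_add_right scaleR_add_left)
end

(* points of the plane: real \<times> real; vertices indexed 0..n-1, indices mod n *)

definition tri_area :: "real \<times> real \<Rightarrow> real \<times> real \<Rightarrow> real \<times> real \<Rightarrow> real" where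
  "tri_area p q r = ((fst q - fst p) * (snd r - snd p) - (snd q - snd p) * (fst r - fst p)) / 2"

definition nxt :: "nat \<Rightarrow> nat \<Rightarrow> nat" where "nxt n i = Suc i mod n"
definition prv :: "nat \<Rightarrow> nat \<Rightarrow> nat" where "prv n i = (i + n - 1) mod n"

definition polygon :: "(nat \<Rightarrow> real \<times> real) \<Rightarrow> nat \<Rightarrow> (real \<times> real) set" where
  "polygon v n = convex hull (v ` {..<n})"

(* v 0, ..., v (n-1) are the extreme points of the convex polygon, listed counterclockwise:
   every other vertex lies strictly to the left of each directed edge [v i, v (i+1)]. *)
definition ccw_convex_polygon :: "(nat \<Rightarrow> real \<times> real) \<Rightarrow> nat \<Rightarrow> bool" where
  "ccw_convex_polygon v n \<longleftrightarrow> 3 \<le> n \<and> inj_on v {..<n}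
     \<and> {p. p extreme_point_of polygon v n} = v ` {..<n}
     \<and> (\<forall>i<n. \<forall>j<n. j \<noteq> i \<and> j \<noteq> nxt n i \<longrightarrow> tri_area (v i) (v (nxt n i)) (v j) > 0)"

definition coord_feasible :: "(nat \<Rightarrow> real \<times> real) \<Rightarrow> nat \<Rightarrow> real \<times> real \<Rightarrow> (nat \<Rightarrow> real) set" where
  "coord_feasible v n x = {c. (\<forall>i<n. 0 \<le> c i) \<and> (\<forall>i\<ge>n. c i = 0) \<and> (\<Sum>i<n. c i) = 1
        \<and> (\<Sum>i<n. c i *\<^sub>R v i) = x}"

definition entropy :: "nat \<Rightarrow> (nat \<Rightarrow> real) \<Rightarrow> real" where
  "entropy n c = - (\<Sum>i<n. if c i = 0 then 0 else c i * ln (c i))"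

definition gibbs :: "(nat \<Rightarrow> real \<times> real) \<Rightarrow> nat \<Rightarrow> real \<times> real \<Rightarrow> nat \<Rightarrow> real" where
  "gibbs v n x = (THE q. q \<in> coord_feasible v n x \<and>
                    (\<forall>p \<in> coord_feasible v n x. entropy n p \<le> entropy n q))"

definition wach_weight :: "(nat \<Rightarrow> real \<times> real) \<Rightarrow> nat \<Rightarrow> real \<times> real \<Rightarrow> nat \<Rightarrow> real" where
  "wach_weight v n x i = tri_area (v (prv n i)) (v i) (v (nxt n i))
     / (tri_area (v (prv n i)) (v i) x * tri_area x (v i) (v (nxt n i)))"

definition wach_boundary :: "(nat \<Rightarrow> real \<times> real) \<Rightarrow> nat \<Rightarrow> real \<times> real \<Rightarrow> nat \<Rightarrow> real" where
  "wach_boundary v n x =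
     (let j = (SOME j. j < n \<and> x \<in> closed_segment (v j) (v (nxt n j)));
          t = (THE t. 0 \<le> t \<and> t \<le> 1 \<and> x = (1 - t) *\<^sub>R v j + t *\<^sub>R v (nxt n j))
      in (\<lambda>k. if k = j then 1 - t else if k = nxt n j then t else 0))"

definition wachspress :: "(nat \<Rightarrow> real \<times> real) \<Rightarrow> nat \<Rightarrow> real \<times> real \<Rightarrow> nat \<Rightarrow> real" where
  "wachspress v n x =
     (if x \<in> interior (polygon v n)
      then (\<lambda>i. if i < n then wach_weight v n x i / (\<Sum>j<n. wach_weight v n x j) else 0)
      else wach_boundary v n x)"

(* G-W discrepancy vector in R^(n-1): coordinates 0..n-2 (paper's 1..n-1), zero beyond *)
definition gw_discrepancy :: "(nat \<Rightarrow> real \<times> real) \<Rightarrow> nat \<Rightarrow> real \<times> real \<Rightarrow> nat \<Rightarrow> real" where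
  "gw_discrepancy v n x = (\<lambda>i. if i < n - 1 then gibbs v n x i - wachspress v n x i else 0)"

(* R^(n-1) as functions supported on {..<n-1} *)
definition Rn :: "nat \<Rightarrow> (nat \<Rightarrow> real) set" where
  "Rn m = {f. \<forall>i\<ge>m. f i = 0}"

end

theory Submission
  imports Defs "HOL-Real_Asymp.Real_Asymp"
begin

(* Gibbs and Wachspress coordinates of a point x of the polygon are both barycentric
   coordinates of x: nonnegative weights c with sum_i c_i = 1 and sum_i c_i v_i = x.
   Gibbs coordinates exist because the entropy is continuous and strictly concave on the compact
   convex set of such weights; Wachspress coordinates are barycentric because for interior x
   the sum sum_i w_i (v_i - x) telescopes to 0, while on the boundary they are the coordinates
   along an edge. Hence D(x) = q - w satisfies sum_i D_i = 0 and sum_i D_i v_i = 0, that is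
   sum_{i<n-1} D_i (v_i - v_{n-1}) = 0, and the solutions of these two linear equations form a
   subspace of dimension n - 3 because v_0 - v_{n-1} and v_1 - v_{n-1} are independent. *)

lemma sum_fun_apply: "(\<Sum>k\<in>A. F k) x = (\<Sum>k\<in>A. F k x :: 'b::comm_monoid_add)"
  by (induction A rule: infinite_finite_induct) auto

lemma scaleR_fun_apply [simp]: "(r *\<^sub>R f) x = r *\<^sub>R f x"
  by (simp add: scaleR_fun_def)

lemma dim_eq_card_if_unit_vectors:
  fixes V :: "('a \<Rightarrow> real) set" and b :: "'a \<Rightarrow> 'a \<Rightarrow> real"
  assumes V: "subspace V" and K: "finite K"
    and vanish: "\<And>f. f \<in> V \<Longrightarrow> \<forall>k\<in>K. f k = 0 \<Longrightarrow> f = 0"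
    and b_in: "\<And>k. k \<in> K \<Longrightarrow> b k \<in> V"
    and b_unit: "\<And>k k'. k \<in> K \<Longrightarrow> k' \<in> K \<Longrightarrow> b k k' = (if k = k' then 1 else 0)"
  shows "dim V = card K"
proof -
  have coeff: "(\<Sum>k\<in>K'. c k *\<^sub>R b k) k' = c k'"
    if "K' \<subseteq> K" "finite K'" "k' \<in> K'" for K' c k'
  proof -
    have "(\<Sum>k\<in>K'. c k *\<^sub>R b k) k' = (\<Sum>k\<in>K'. if k = k' then c k else 0)"
      unfolding sum_fun_apply using that by (intro sum.cong) (auto simp: b_unit subset_eq)
    then show ?thesis
      using that by simp
  qed
  have inj: "inj_on b K"
    by (rule inj_onI) (metis b_unit zero_neq_one)
  have "independent (b ` K)"
    unfolding real_vector.independent_explicit_module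
  proof (intro allI impI)
    fix T c v assume T: "finite T" "T \<subseteq> b ` K" and sum: "(\<Sum>w\<in>T. c w *\<^sub>R w) = 0" and "v \<in> T"
    then obtain K' k where K': "K' \<subseteq> K" "T = b ` K'" "k \<in> K'" "v = b k"
      by (auto simp: subset_image_iff)
    have "inj_on b K'"
      using inj K'(1) by (rule inj_on_subset)
    then have "(\<Sum>k\<in>K'. c (b k) *\<^sub>R b k) = 0" and "finite K'"
      using sum T(1) K'(2) by (simp_all add: sum.reindex finite_image_iff)
    then show "c v = 0"
      using coeff[where c = "c \<circ> b" and K' = K'] K' by (simp add: zero_fun_def)
  qed
  moreover have "V \<subseteq> span (b ` K)"
  proof
    fix f assume f: "f \<in> V"
    define g where "g = (\<Sum>k\<in>K. f k *\<^sub>R b k)"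
    have g_span: "g \<in> span (b ` K)"
      unfolding g_def by (intro span_sum span_scale span_base) auto
    have "g \<in> V"
      unfolding g_def by (intro subspace_sum[OF V] subspace_scale[OF V] b_in)
    then have "f - g = 0"
      using f coeff[where c = f and K' = K] K
      by (intro vanish subspace_diff[OF V]) (auto simp: g_def)
    then show "f \<in> span (b ` K)"
      using g_span by simp
  qed
  ultimately have "card (b ` K) = dim V"
    using b_in by (intro basis_card_eq_dim) auto
  then show ?thesis
    using card_image[OF inj] by simp
qed

definition linear_relations :: "nat \<Rightarrow> (nat \<Rightarrow> 'a::real_vector) \<Rightarrow> (nat \<Rightarrow> real) set" where
  "linear_relations m u = {f \<in> Rn m. (\<Sum>i<m. f i *\<^sub>R u i) = 0}"

lemma subspace_linear_relations: "subspace (linear_relations m u)"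
  unfolding subspace_def linear_relations_def Rn_def
  by (auto simp: scaleR_add_left sum.distrib simp flip: scaleR_scaleR scaleR_sum_right)

lemma dim_linear_relations_pair:
  fixes u :: "nat \<Rightarrow> 'a::real_vector"
  assumes m: "2 \<le> m"
    and indep: "\<And>a b. a *\<^sub>R u 0 + b *\<^sub>R u 1 = 0 \<Longrightarrow> a = 0 \<and> b = 0"
    and spans: "\<And>k. k < m \<Longrightarrow> \<exists>a b. u k = a *\<^sub>R u 0 + b *\<^sub>R u 1"
  shows "dim (linear_relations m u) = m - 2"
proof -
  obtain \<alpha> \<beta> where \<alpha>\<beta>: "\<And>k. k < m \<Longrightarrow> u k = \<alpha> k *\<^sub>R u 0 + \<beta> k *\<^sub>R u 1"
    using spans by metis
  define b where "b k i = (if i = k then 1 else 0) - (if i = 0 then \<alpha> k else 0)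
    - (if i = 1 then \<beta> k else 0)" for k i
  have "dim (linear_relations m u) = card {2..<m}"
  proof (rule dim_eq_card_if_unit_vectors[OF subspace_linear_relations, where b = b])
    fix f assume "f \<in> linear_relations m u" and "\<forall>k\<in>{2..<m}. f k = 0"
    then have supp: "f i = 0" if "i \<noteq> 0" "i \<noteq> 1" for i
      using that by (cases "i < m") (auto simp: linear_relations_def Rn_def)
    have "(\<Sum>i<m. f i *\<^sub>R u i) = (\<Sum>i\<in>{0,1}. f i *\<^sub>R u i)"
      by (rule sum.mono_neutral_right) (use m supp in auto)
    then have "f 0 *\<^sub>R u 0 + f 1 *\<^sub>R u 1 = 0"
      using \<open>f \<in> linear_relations m u\<close> by (simp add: linear_relations_def)
    then have "f 0 = 0 \<and> f 1 = 0"
      by (rule indep)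
    then have "f i = 0" for i
      using supp by (cases "i = 0 \<or> i = 1") auto
    then show "f = 0"
      by (simp add: fun_eq_iff)
  next
    fix k assume k: "k \<in> {2..<m}"
    have "b k i *\<^sub>R u i = (if i = k then u k else 0) - (if i = 0 then \<alpha> k *\<^sub>R u 0 else 0)
        - (if i = 1 then \<beta> k *\<^sub>R u 1 else 0)" for i
      using k by (auto simp: b_def)
    then have "(\<Sum>i<m. b k i *\<^sub>R u i) = u k - \<alpha> k *\<^sub>R u 0 - \<beta> k *\<^sub>R u 1"
      using k m by (simp add: sum_subtractf)
    then show "b k \<in> linear_relations m u"
      using k \<alpha>\<beta>[of k] by (auto simp: linear_relations_def Rn_def b_def)
  qed (auto simp: b_def)
  then show ?thesis
    by simp
qed

lemma nxt_less: "0 < n \<Longrightarrow> nxt n i < n"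
  by (simp add: nxt_def)

lemma prv_less: "0 < n \<Longrightarrow> prv n i < n"
  by (simp add: prv_def)

lemma nxt_prv: "i < n \<Longrightarrow> nxt n (prv n i) = i"
  unfolding nxt_def prv_def by (cases i) (auto simp: mod_Suc Suc_diff_1 mod_if)

lemma prv_nxt: "i < n \<Longrightarrow> prv n (nxt n i) = i"
  unfolding nxt_def prv_def by (auto simp: mod_Suc mod_if)

lemma nxt_neq: "1 < n \<Longrightarrow> i < n \<Longrightarrow> nxt n i \<noteq> i"
  unfolding nxt_def by (auto simp: mod_Suc mod_if)

lemma prv_neq: "1 < n \<Longrightarrow> i < n \<Longrightarrow> prv n i \<noteq> i"
  by (metis nxt_neq nxt_prv prv_less less_trans zero_less_one)

lemma prv_neq_nxt: "2 < n \<Longrightarrow> i < n \<Longrightarrow> prv n i \<noteq> nxt n i"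
  unfolding nxt_def prv_def by (auto simp: mod_Suc mod_if split: if_splits)

lemma sum_prv_reindex: "0 < n \<Longrightarrow> (\<Sum>i<n. f (prv n i)) = (\<Sum>i<n. f i)"
  by (rule sum.reindex_bij_witness[where i = "nxt n" and j = "prv n"])
    (auto simp: nxt_prv prv_nxt nxt_less prv_less)

lemma tri_area_rotate: "tri_area p q r = tri_area q r p"
  unfolding tri_area_def by (simp add: algebra_simps)

definition edge_normal :: "real \<times> real \<Rightarrow> real \<times> real \<Rightarrow> real \<times> real" where
  "edge_normal p q = ((snd p - snd q) / 2, (fst q - fst p) / 2)"

lemma tri_area_eq_inner: "tri_area p q y = edge_normal p q \<bullet> y - edge_normal p q \<bullet> p"
  by (cases p; cases q; cases y) (simp add: tri_area_def edge_normal_def algebra_simps divide_simps)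

lemma edge_normal_eq_0_iff: "edge_normal p q = 0 \<longleftrightarrow> p = q"
  by (cases p; cases q) (auto simp: edge_normal_def prod_eq_iff)

lemma tri_area_weight_telescope:
  fixes a b c y :: "real \<times> real"
  assumes "tri_area a b y \<noteq> 0" "tri_area b c y \<noteq> 0"
  shows "(tri_area a b c / (tri_area a b y * tri_area b c y)) *\<^sub>R (b - y)
          = (1 / tri_area b c y) *\<^sub>R (b - c) - (1 / tri_area a b y) *\<^sub>R (a - b)"
proof -
  obtain a1 a2 b1 b2 c1 c2 y1 y2
    where pts: "a = (a1, a2)" "b = (b1, b2)" "c = (c1, c2)" "y = (y1, y2)"
    by (metis prod.exhaust)
  define A1 A2 C where "A1 = tri_area a b y" and "A2 = tri_area b c y" and "C = tri_area a b c"
  have "C * (b1 - y1) = A1 * (b1 - c1) - A2 * (a1 - b1)"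
    "C * (b2 - y2) = A1 * (b2 - c2) - A2 * (a2 - b2)"
    unfolding A1_def A2_def C_def pts tri_area_def by (simp, algebra)+
  moreover have "A1 \<noteq> 0" "A2 \<noteq> 0"
    using assms by (simp_all add: A1_def A2_def)
  ultimately have "C / (A1 * A2) * (b1 - y1) = 1 / A2 * (b1 - c1) - 1 / A1 * (a1 - b1)"
    "C / (A1 * A2) * (b2 - y2) = 1 / A2 * (b2 - c2) - 1 / A1 * (a2 - b2)"
    by (simp_all add: field_simps)
  then show ?thesis
    unfolding A1_def[symmetric] A2_def[symmetric] C_def[symmetric] by (simp add: pts prod_eq_iff)
qed

lemma tri_area_nonzero_basis:
  assumes "tri_area c p q \<noteq> 0"
  shows "a *\<^sub>R (p - c) + b *\<^sub>R (q - c) = 0 \<Longrightarrow> a = 0 \<and> b = 0"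
    and "\<exists>a b. r = a *\<^sub>R (p - c) + b *\<^sub>R (q - c)"
proof -
  obtain x1 x2 y1 y2 where xy: "p - c = (x1, x2)" "q - c = (y1, y2)"
    by (metis prod.exhaust)
  define \<delta> where "\<delta> = x1 * y2 - x2 * y1"
  have \<delta>: "\<delta> \<noteq> 0"
    using assms xy by (auto simp: tri_area_def \<delta>_def prod_eq_iff)
  show "a = 0 \<and> b = 0" if "a *\<^sub>R (p - c) + b *\<^sub>R (q - c) = 0"
  proof -
    have "a * x1 + b * y1 = 0" "a * x2 + b * y2 = 0"
      using that xy by (simp_all add: prod_eq_iff)
    then have "a * \<delta> = 0" "b * \<delta> = 0"
      unfolding \<delta>_def by algebra+
    then show ?thesis
      using \<delta> by simp
  qed
  obtain r1 r2 where r: "r = (r1, r2)"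
    by (metis prod.exhaust)
  have "(r1 * y2 - r2 * y1) * x1 + (x1 * r2 - x2 * r1) * y1 = r1 * \<delta>"
    "(r1 * y2 - r2 * y1) * x2 + (x1 * r2 - x2 * r1) * y2 = r2 * \<delta>"
    unfolding \<delta>_def by algebra+
  then have "r = ((r1 * y2 - r2 * y1) / \<delta>) *\<^sub>R (p - c) + ((x1 * r2 - x2 * r1) / \<delta>) *\<^sub>R (q - c)"
    using \<delta> unfolding xy r by (simp add: prod_eq_iff field_simps)
  then show "\<exists>a b. r = a *\<^sub>R (p - c) + b *\<^sub>R (q - c)"
    by blast
qed

(* The case distinction in entropy is redundant: ln 0 = 0 in Isabelle. *)

lemma entropy_eq: "entropy n c = - (\<Sum>i<n. c i * ln (c i))"
  unfolding entropy_def by (intro arg_cong[where f = uminus] sum.cong) auto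

lemma continuous_on_x_ln: "continuous_on {0..} (\<lambda>t::real. t * ln t)"
proof (rule continuous_on_eq_continuous_within[THEN iffD2], intro ballI)
  fix t :: real assume "t \<in> {0..}"
  then have "t = 0 \<or> t > 0"
    by auto
  then show "continuous (at t within {0..}) (\<lambda>t. t * ln t)"
  proof
    assume "t = 0"
    have "((\<lambda>t::real. t * ln t) \<longlongrightarrow> 0) (at_right 0)"
      by real_asymp
    then have "continuous (at 0 within {0..}) (\<lambda>t::real. t * ln t)"
      unfolding continuous_within at_within_Ici_at_right by simp
    with \<open>t = 0\<close> show ?thesis
      by simp
  next
    assume "t > 0"
    show ?thesis
      by (rule continuous_at_imp_continuous_within)
        (use \<open>t > 0\<close> in \<open>auto intro!: continuous_intros\<close>)
  qed
qed

lemma x_ln_midpoint_less: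
  fixes a b :: real
  assumes "0 \<le> a" "0 \<le> b" "a \<noteq> b"
  shows "2 * ((a + b) / 2 * ln ((a + b) / 2)) < a * ln a + b * ln b"
proof -
  define m where "m = (a + b) / 2"
  have m: "0 < m" "a \<noteq> m" "b \<noteq> m"
    using assms by (auto simp: m_def)
  have tangent: "c - m < c * ln c - c * ln m" if "0 \<le> c" "c \<noteq> m" for c
  proof (cases "c = 0")
    case False
    then have c: "0 < c"
      using that by simp
    have "ln (m / c) < m / c - 1"
      using ln_le_minus_one[of "m / c"] ln_eq_minus_one[of "m / c"] c m that by force
    then have "c * ln (m / c) < c * (m / c - 1)"
      using c by simp
    then show ?thesis
      using c m by (simp add: ln_div algebra_simps)
  qed (use m in simp)
  have "(a - m) + (b - m) < (a * ln a + b * ln b) - (a + b) * ln m"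
    using tangent[of a] tangent[of b] assms m by (simp add: algebra_simps)
  then show ?thesis
    by (simp add: m_def algebra_simps)
qed

lemma x_ln_midpoint_le:
  fixes a b :: real
  assumes "0 \<le> a" "0 \<le> b"
  shows "2 * ((a + b) / 2 * ln ((a + b) / 2)) \<le> a * ln a + b * ln b"
proof (cases "a = b")
  case True
  then show ?thesis
    by simp
qed (use x_ln_midpoint_less[OF assms] in simp)

lemma continuous_on_entropy: "continuous_on {c. \<forall>i<n. 0 \<le> c i} (entropy n)"
proof -
  have summand: "continuous_on {c. \<forall>i<n. 0 \<le> c i} (\<lambda>c::nat \<Rightarrow> real. c i * ln (c i))"
    if "i < n" for i
  proof -
    have coord: "continuous_on {c. \<forall>i<n. 0 \<le> c i} (\<lambda>c::nat \<Rightarrow> real. c i)"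
      by (rule continuous_on_subset[OF continuous_on_product_coordinates]) simp
    have "(\<lambda>c. c i) ` {c. \<forall>i<n. 0 \<le> c i} \<subseteq> {0..}"
      using that by auto
    from continuous_on_compose2[OF continuous_on_x_ln coord this] show ?thesis .
  qed
  show ?thesis
    unfolding entropy_eq by (intro continuous_on_minus continuous_on_sum) (simp add: summand)
qed

lemma entropy_midpoint_gt:
  assumes "\<forall>i<n. 0 \<le> p i" "\<forall>i<n. 0 \<le> q i" "i < n" "p i \<noteq> q i"
  shows "entropy n p + entropy n q < 2 * entropy n (midpoint p q)"
proof -
  have "(\<Sum>j<n. 2 * ((p j + q j) / 2 * ln ((p j + q j) / 2)))
      < (\<Sum>j<n. p j * ln (p j) + q j * ln (q j))"
  proof (rule sum_strict_mono_ex1)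
    show "\<forall>j\<in>{..<n}. 2 * ((p j + q j) / 2 * ln ((p j + q j) / 2)) \<le> p j * ln (p j) + q j * ln (q j)"
      by (intro ballI x_ln_midpoint_le) (use assms in auto)
    show "\<exists>j\<in>{..<n}. 2 * ((p j + q j) / 2 * ln ((p j + q j) / 2)) < p j * ln (p j) + q j * ln (q j)"
      using assms by (intro bexI[of _ i] x_ln_midpoint_less) auto
  qed simp
  then show ?thesis
    by (simp add: entropy_eq midpoint_def sum.distrib sum_distrib_left add_divide_distrib)
qed

lemma convex_coord_feasible: "convex (coord_feasible v n x)"
proof (rule convexI)
  fix p q :: "nat \<Rightarrow> real" and a b :: real
  assume p: "p \<in> coord_feasible v n x" and q: "q \<in> coord_feasible v n x"
    and ab: "0 \<le> a" "0 \<le> b" "a + b = 1"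
  have "(\<Sum>i<n. (a *\<^sub>R p + b *\<^sub>R q) i) = a * (\<Sum>i<n. p i) + b * (\<Sum>i<n. q i)"
    by (simp add: sum.distrib sum_distrib_left)
  moreover have "(\<Sum>i<n. (a *\<^sub>R p + b *\<^sub>R q) i *\<^sub>R v i)
      = a *\<^sub>R (\<Sum>i<n. p i *\<^sub>R v i) + b *\<^sub>R (\<Sum>i<n. q i *\<^sub>R v i)"
    by (simp add: sum.distrib scaleR_sum_right scaleR_add_left)
  ultimately show "a *\<^sub>R p + b *\<^sub>R q \<in> coord_feasible v n x"
    using p q ab by (simp add: coord_feasible_def flip: scaleR_add_left)
qed

lemma compact_coord_feasible: "compact (coord_feasible v n x)"
proof -
  define I where "I i = (if i < n then {0..1::real} else {0})" for i
  have "compactin (product_topology (\<lambda>i. euclidean) UNIV) (PiE UNIV I)"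
    unfolding compactin_PiE by (auto simp: I_def)
  then have "compact (PiE UNIV I)"
    by (simp add: euclidean_product_topology)
  moreover have "closed ({c. (\<Sum>i<n. c i) = 1} \<inter> {c. (\<Sum>i<n. c i *\<^sub>R v i) = x})"
    by (intro closed_Int closed_Collect_eq continuous_on_sum continuous_on_scaleR
        continuous_on_product_coordinates continuous_on_const)
  moreover have "coord_feasible v n x
      = ({c. (\<Sum>i<n. c i) = 1} \<inter> {c. (\<Sum>i<n. c i *\<^sub>R v i) = x}) \<inter> PiE UNIV I"
  proof (intro equalityI subsetI)
    fix c assume c: "c \<in> coord_feasible v n x"
    have "c i \<le> 1" if "i < n" for i
      using c that member_le_sum[of i "{..<n}" c] by (auto simp: coord_feasible_def)
    then show "c \<in> ({c. (\<Sum>i<n. c i) = 1} \<inter> {c. (\<Sum>i<n. c i *\<^sub>R v i) = x}) \<inter> PiE UNIV I"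
      using c by (auto simp: coord_feasible_def I_def)
  next
    fix c assume c: "c \<in> ({c. (\<Sum>i<n. c i) = 1} \<inter> {c. (\<Sum>i<n. c i *\<^sub>R v i) = x}) \<inter> PiE UNIV I"
    then have I: "c i \<in> I i" for i
      by (simp add: PiE_iff)
    have "0 \<le> c i" if "i < n" for i
      using I[of i] that by (simp add: I_def)
    moreover have "c i = 0" if "n \<le> i" for i
      using I[of i] that by (simp add: I_def)
    ultimately show "c \<in> coord_feasible v n x"
      using c by (simp add: coord_feasible_def)
  qed
  ultimately show ?thesis
    by (simp add: closed_Int_compact)
qed

lemma entropy_maximizer_unique:
  assumes p: "p \<in> coord_feasible v n x" and q: "q \<in> coord_feasible v n x"
    and p_max: "\<forall>r\<in>coord_feasible v n x. entropy n r \<le> entropy n p"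
    and q_max: "\<forall>r\<in>coord_feasible v n x. entropy n r \<le> entropy n q"
  shows "p = q"
proof (rule ccontr)
  assume "p \<noteq> q"
  then obtain i where "p i \<noteq> q i"
    by auto
  moreover have "i < n"
  proof (rule ccontr)
    assume "\<not> i < n"
    then show False
      using \<open>p i \<noteq> q i\<close> p q by (simp add: coord_feasible_def)
  qed
  ultimately have "entropy n p + entropy n q < 2 * entropy n (midpoint p q)"
    using p q by (intro entropy_midpoint_gt) (auto simp: coord_feasible_def)
  moreover have "midpoint p q \<in> coord_feasible v n x"
  proof -
    have "(1/2) *\<^sub>R p + (1/2) *\<^sub>R q \<in> coord_feasible v n x"
      by (rule convexD[OF convex_coord_feasible p q]) auto
    moreover have "midpoint p q = (1/2) *\<^sub>R p + (1/2) *\<^sub>R q"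
      by (simp add: midpoint_def scaleR_add_right)
    ultimately show ?thesis
      by simp
  qed
  ultimately show False
    using p_max[rule_format, of q] p_max[rule_format, of "midpoint p q"] q_max[rule_format, of p]
      p q by linarith
qed

lemma gibbs_in_coord_feasible:
  assumes "coord_feasible v n x \<noteq> {}"
  shows "gibbs v n x \<in> coord_feasible v n x"
proof -
  have "coord_feasible v n x \<subseteq> {c. \<forall>i<n. 0 \<le> c i}"
    by (auto simp: coord_feasible_def)
  then obtain q where q: "q \<in> coord_feasible v n x"
    and q_max: "\<forall>p\<in>coord_feasible v n x. entropy n p \<le> entropy n q"
    using continuous_attains_sup[OF compact_coord_feasible assms
        continuous_on_subset[OF continuous_on_entropy]] by blast
  have "gibbs v n x = q"
    unfolding gibbs_def
    by (rule the_equality) (use q q_max entropy_maximizer_unique[OF _ q _ q_max] in blast)+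
  then show ?thesis
    using q by simp
qed

lemma coord_feasible_imp_polygon:
  assumes "c \<in> coord_feasible v n x"
  shows "x \<in> polygon v n"
proof -
  have "(\<Sum>i<n. c i *\<^sub>R v i) \<in> convex hull (v ` {..<n})"
    using assms by (intro convex_sum) (auto simp: coord_feasible_def hull_inc)
  then show ?thesis
    using assms by (simp add: coord_feasible_def polygon_def)
qed

lemma segment_coords_feasible:
  assumes "1 < n" "j < n" "0 \<le> t" "t \<le> 1"
  shows "(\<lambda>k. if k = j then 1 - t else if k = nxt n j then t else 0)
    \<in> coord_feasible v n ((1 - t) *\<^sub>R v j + t *\<^sub>R v (nxt n j))"
proof -
  have j: "nxt n j < n" "nxt n j \<noteq> j"
    using assms nxt_less nxt_neq by auto
  have split: "(if k = j then a else if k = nxt n j then b else 0)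
      = (if k = j then a else 0) + (if k = nxt n j then b else 0)"
    for k :: nat and a b :: "'b::comm_monoid_add"
    using j by auto
  show ?thesis
    unfolding coord_feasible_def using assms j
    by (simp add: split sum.distrib scaleR_add_left if_distrib[where f = "\<lambda>c. c *\<^sub>R _"]
        cong: if_cong)
qed

lemma sum_wach_weight_scaleR:
  assumes n: "0 < n" and nz: "\<forall>i<n. tri_area (v i) (v (nxt n i)) y \<noteq> 0"
  shows "(\<Sum>i<n. wach_weight v n y i *\<^sub>R (v i - y)) = 0"
proof -
  define r where "r k = (1 / tri_area (v k) (v (nxt n k)) y) *\<^sub>R (v k - v (nxt n k))" for k
  have "wach_weight v n y i *\<^sub>R (v i - y) = r i - r (prv n i)" if i: "i < n" for i
  proof -
    have "tri_area (v (prv n i)) (v i) y \<noteq> 0" "tri_area (v i) (v (nxt n i)) y \<noteq> 0"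
      using nz prv_less[OF n, of i] nxt_prv[OF i] i by metis+
    moreover have "wach_weight v n y i = tri_area (v (prv n i)) (v i) (v (nxt n i)) /
        (tri_area (v (prv n i)) (v i) y * tri_area (v i) (v (nxt n i)) y)"
      unfolding wach_weight_def using tri_area_rotate[of y "v i" "v (nxt n i)"] by simp
    ultimately show ?thesis
      using tri_area_weight_telescope unfolding r_def nxt_prv[OF i] by simp
  qed
  then have "(\<Sum>i<n. wach_weight v n y i *\<^sub>R (v i - y)) = (\<Sum>i<n. r i - r (prv n i))"
    by simp
  also have "\<dots> = 0"
    by (simp add: sum_subtractf sum_prv_reindex[OF n])
  finally show ?thesis .
qed

context
  fixes v :: "nat \<Rightarrow> real \<times> real" and n :: nat
  assumes P: "ccw_convex_polygon v n"
begin

lemma three_le_num_vertices: "3 \<le> n"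
  using P by (simp add: ccw_convex_polygon_def)

lemma edge_tri_area_pos:
  "i < n \<Longrightarrow> j < n \<Longrightarrow> j \<noteq> i \<Longrightarrow> j \<noteq> nxt n i \<Longrightarrow> 0 < tri_area (v i) (v (nxt n i)) (v j)"
  using P by (simp add: ccw_convex_polygon_def)

lemma corner_tri_area_pos:
  assumes "i < n"
  shows "0 < tri_area (v (prv n i)) (v i) (v (nxt n i))"
proof -
  have "nxt n i \<noteq> prv n i" "nxt n i \<noteq> nxt n (prv n i)"
    using prv_neq_nxt[of n i] nxt_neq[of n i] nxt_prv[of i n] three_le_num_vertices assms by auto
  then show ?thesis
    using edge_tri_area_pos[of "prv n i" "nxt n i"] three_le_num_vertices assms
    by (simp add: prv_less nxt_less nxt_prv)
qed

lemma vertex_neq_nxt: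
  assumes "i < n"
  shows "v i \<noteq> v (nxt n i)"
proof
  assume "v i = v (nxt n i)"
  moreover have "0 < tri_area (v i) (v (nxt n i)) (v (prv n i))"
    using edge_tri_area_pos[of i "prv n i"] three_le_num_vertices assms
    by (simp add: prv_less prv_neq_nxt prv_neq)
  ultimately show False
    by (simp add: tri_area_def)
qed

lemma polygon_subset_halfplane:
  assumes "i < n"
  shows "polygon v n
    \<subseteq> {y. edge_normal (v i) (v (nxt n i)) \<bullet> v i \<le> edge_normal (v i) (v (nxt n i)) \<bullet> y}"
  unfolding polygon_def
proof (rule hull_minimal)
  have "0 \<le> tri_area (v i) (v (nxt n i)) (v j)" if "j < n" for j
    using edge_tri_area_pos[of i j] assms that
    by (cases "j = i \<or> j = nxt n i") (auto simp: tri_area_def)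
  then show "v ` {..<n}
    \<subseteq> {y. edge_normal (v i) (v (nxt n i)) \<bullet> v i \<le> edge_normal (v i) (v (nxt n i)) \<bullet> y}"
    by (auto simp: tri_area_eq_inner)
qed (rule convex_halfspace_ge)

lemma tri_area_nonneg_polygon:
  "i < n \<Longrightarrow> y \<in> polygon v n \<Longrightarrow> 0 \<le> tri_area (v i) (v (nxt n i)) y"
  using polygon_subset_halfplane by (force simp: tri_area_eq_inner)

lemma wach_weight_pos:
  assumes inside: "\<forall>i<n. 0 < tri_area (v i) (v (nxt n i)) y" and "i < n"
  shows "0 < wach_weight v n y i"
proof -
  have "0 < tri_area (v (prv n i)) (v i) y"
    using inside prv_less[of n i] nxt_prv[of i n] three_le_num_vertices assms(2)
    by (metis less_le_trans zero_less_numeral)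
  moreover have "0 < tri_area y (v i) (v (nxt n i))"
    using inside assms(2) tri_area_rotate[of y "v i" "v (nxt n i)"] by simp
  ultimately show ?thesis
    unfolding wach_weight_def using corner_tri_area_pos[OF assms(2)] by simp
qed

lemma normalized_wach_weight_feasible:
  assumes inside: "\<forall>i<n. 0 < tri_area (v i) (v (nxt n i)) y"
  defines "W \<equiv> \<Sum>j<n. wach_weight v n y j"
  shows "(\<lambda>i. if i < n then wach_weight v n y i / W else 0) \<in> coord_feasible v n y"
proof -
  have n: "0 < n"
    using three_le_num_vertices by simp
  have W: "0 < W"
    unfolding W_def using wach_weight_pos[OF inside] n by (intro sum_pos) auto
  have "(\<Sum>i<n. wach_weight v n y i *\<^sub>R v i) - W *\<^sub>R y = (\<Sum>i<n. wach_weight v n y i *\<^sub>R (v i - y))"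
    by (simp add: W_def scaleR_diff_right sum_subtractf scaleR_sum_left)
  also have "\<dots> = 0"
    using inside by (intro sum_wach_weight_scaleR[OF n]) auto
  finally have "(\<Sum>i<n. wach_weight v n y i *\<^sub>R v i) = W *\<^sub>R y"
    by simp
  moreover have "(\<Sum>i<n. (wach_weight v n y i / W) *\<^sub>R v i)
      = (1 / W) *\<^sub>R (\<Sum>i<n. wach_weight v n y i *\<^sub>R v i)"
    by (simp add: scaleR_sum_right)
  ultimately have "(\<Sum>i<n. (wach_weight v n y i / W) *\<^sub>R v i) = y"
    using W by simp
  then show ?thesis
    using W wach_weight_pos[OF inside]
    by (auto simp: coord_feasible_def W_def less_imp_le sum_divide_distrib[symmetric])
qed

lemma interior_polygon_eq:
  "interior (polygon v n) = {y. \<forall>i<n. 0 < tri_area (v i) (v (nxt n i)) y}"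
proof
  show "interior (polygon v n) \<subseteq> {y. \<forall>i<n. 0 < tri_area (v i) (v (nxt n i)) y}"
  proof clarify
    fix y i assume y: "y \<in> interior (polygon v n)" and i: "i < n"
    have "edge_normal (v i) (v (nxt n i)) \<noteq> 0"
      using vertex_neq_nxt[OF i] by (simp add: edge_normal_eq_0_iff)
    then have "y \<in> {y. edge_normal (v i) (v (nxt n i)) \<bullet> v i < edge_normal (v i) (v (nxt n i)) \<bullet> y}"
      using interior_mono[OF polygon_subset_halfplane[OF i]] y by auto
    then show "0 < tri_area (v i) (v (nxt n i)) y"
      by (simp add: tri_area_eq_inner)
  qed
  have "{y. \<forall>i<n. 0 < tri_area (v i) (v (nxt n i)) y}
      = (\<Inter>i<n. {y. edge_normal (v i) (v (nxt n i)) \<bullet> v i < edge_normal (v i) (v (nxt n i)) \<bullet> y})"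
    by (auto simp: tri_area_eq_inner)
  then have "open {y. \<forall>i<n. 0 < tri_area (v i) (v (nxt n i)) y}"
    by (simp add: open_INT open_halfspace_gt)
  moreover have "{y. \<forall>i<n. 0 < tri_area (v i) (v (nxt n i)) y} \<subseteq> polygon v n"
    using normalized_wach_weight_feasible coord_feasible_imp_polygon by blast
  ultimately show "{y. \<forall>i<n. 0 < tri_area (v i) (v (nxt n i)) y} \<subseteq> interior (polygon v n)"
    by (rule interior_maximal[rotated])
qed

lemma polygon_inter_edge_line:
  assumes j: "j < n" and y: "y \<in> polygon v n" and on_line: "tri_area (v j) (v (nxt n j)) y = 0"
  shows "y \<in> closed_segment (v j) (v (nxt n j))"
proof -
  define N where "N = edge_normal (v j) (v (nxt n j))"
  define F where "F = polygon v n \<inter> {x. N \<bullet> x = N \<bullet> v j}"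
  have "convex (polygon v n)"
    by (simp add: polygon_def)
  moreover have "N \<bullet> v j \<le> N \<bullet> x" if "x \<in> polygon v n" for x
    using polygon_subset_halfplane[OF j] that by (auto simp: N_def)
  ultimately have "F face_of convex hull (v ` {..<n})"
    unfolding F_def polygon_def[symmetric] by (rule face_of_Int_supporting_hyperplane_ge)
  moreover have "compact (v ` {..<n})"
    by (simp add: finite_imp_compact)
  ultimately obtain S where S: "S \<subseteq> v ` {..<n}" "F = convex hull S"
    using face_of_convex_hull_subset by blast
  have "S \<subseteq> {v j, v (nxt n j)}"
  proof
    fix p assume "p \<in> S"
    then obtain k where k: "k < n" "p = v k"
      using S(1) by auto
    have "p \<in> F"
      unfolding S(2) using \<open>p \<in> S\<close> by (rule hull_inc)
    then have "tri_area (v j) (v (nxt n j)) (v k) = 0"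
      by (simp add: F_def N_def tri_area_eq_inner k)
    then have "k = j \<or> k = nxt n j"
      using edge_tri_area_pos[of j k] j k by force
    then show "p \<in> {v j, v (nxt n j)}"
      using k by blast
  qed
  then have "F \<subseteq> closed_segment (v j) (v (nxt n j))"
    unfolding S(2) segment_convex_hull by (rule hull_mono)
  moreover have "y \<in> F"
    using y on_line by (simp add: F_def N_def tri_area_eq_inner)
  ultimately show ?thesis
    by blast
qed

lemma boundary_point_on_edge:
  assumes "y \<in> polygon v n" "y \<notin> interior (polygon v n)"
  shows "\<exists>j<n. y \<in> closed_segment (v j) (v (nxt n j))"
proof -
  obtain j where j: "j < n" "\<not> 0 < tri_area (v j) (v (nxt n j)) y"
    using assms(2) by (auto simp: interior_polygon_eq)
  then have "tri_area (v j) (v (nxt n j)) y = 0"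
    using tri_area_nonneg_polygon[OF j(1) assms(1)] by linarith
  then show ?thesis
    using polygon_inter_edge_line[OF j(1) assms(1)] j(1) by blast
qed

lemma wachspress_in_coord_feasible:
  assumes x: "x \<in> polygon v n"
  shows "wachspress v n x \<in> coord_feasible v n x"
proof (cases "x \<in> interior (polygon v n)")
  case True
  then show ?thesis
    using normalized_wach_weight_feasible by (simp add: wachspress_def interior_polygon_eq)
next
  case False
  define j where "j = (SOME j. j < n \<and> x \<in> closed_segment (v j) (v (nxt n j)))"
  have "j < n \<and> x \<in> closed_segment (v j) (v (nxt n j))"
    unfolding j_def by (rule someI_ex) (use boundary_point_on_edge[OF x False] in blast)
  then obtain t where j: "j < n" and t: "0 \<le> t" "t \<le> 1" "x = (1 - t) *\<^sub>R v j + t *\<^sub>R v (nxt n j)"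
    unfolding closed_segment_def by blast
  have the_t: "(THE t. 0 \<le> t \<and> t \<le> 1 \<and> x = (1 - t) *\<^sub>R v j + t *\<^sub>R v (nxt n j)) = t"
  proof (rule the_equality)
    fix s assume "0 \<le> s \<and> s \<le> 1 \<and> x = (1 - s) *\<^sub>R v j + s *\<^sub>R v (nxt n j)"
    then have "v j + s *\<^sub>R (v (nxt n j) - v j) = v j + t *\<^sub>R (v (nxt n j) - v j)"
      using t(3) by (simp add: algebra_simps)
    then show "s = t"
      using vertex_neq_nxt[OF j] by simp
  qed (use t in auto)
  have "wachspress v n x = (\<lambda>k. if k = j then 1 - t else if k = nxt n j then t else 0)"
    unfolding wachspress_def wach_boundary_def Let_def j_def[symmetric] the_t using False by simp
  then show ?thesis
    using segment_coords_feasible[of n j t v] three_le_num_vertices j t by simp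
qed

end

lemma coord_feasible_diff_in_linear_relations:
  assumes p: "p \<in> coord_feasible v (Suc m) x" and q: "q \<in> coord_feasible v (Suc m) x"
  shows "(\<lambda>i. if i < m then p i - q i else 0) \<in> linear_relations m (\<lambda>i. v i - v m)"
proof -
  define d where "d i = p i - q i" for i
  have "(\<Sum>i<Suc m. d i) = 0" "(\<Sum>i<Suc m. d i *\<^sub>R v i) = 0"
    using p q by (simp_all add: d_def coord_feasible_def sum_subtractf scaleR_diff_left)
  then have "(\<Sum>i<Suc m. d i *\<^sub>R (v i - v m)) = 0"
    by (simp add: scaleR_diff_right sum_subtractf flip: scaleR_sum_left)
  then have "(\<Sum>i<m. d i *\<^sub>R (v i - v m)) = 0"
    by simp
  then show ?thesis
    by (simp add: linear_relations_def Rn_def d_def)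
qed

theorem proposition5p8:
  fixes v :: "nat \<Rightarrow> real \<times> real" and n :: nat
  assumes "ccw_convex_polygon v n"
  shows "\<exists>S :: (nat \<Rightarrow> real) set. subspace S \<and> S \<subseteq> Rn (n - 1) \<and> dim S = n - 3
           \<and> (\<forall>x \<in> polygon v n. gw_discrepancy v n x \<in> S)"
proof -
  obtain m where n: "n = Suc m" and m: "2 \<le> m"
    using three_le_num_vertices[OF assms] by (cases n) auto
  let ?u = "\<lambda>i. v i - v m"
  have "0 < tri_area (v m) (v 0) (v 1)"
    using edge_tri_area_pos[OF assms, of m 1] n m by (simp add: nxt_def)
  then have "dim (linear_relations m ?u) = m - 2"
    using tri_area_nonzero_basis[of "v m" "v 0" "v 1"] by (intro dim_linear_relations_pair m) auto
  moreover have "gw_discrepancy v n x \<in> linear_relations m ?u" if "x \<in> polygon v n" for x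
  proof -
    have "wachspress v n x \<in> coord_feasible v n x"
      using wachspress_in_coord_feasible[OF assms that] .
    moreover from this have "gibbs v n x \<in> coord_feasible v n x"
      by (intro gibbs_in_coord_feasible) blast
    ultimately show ?thesis
      using coord_feasible_diff_in_linear_relations n by (simp add: gw_discrepancy_def)
  qed
  ultimately show ?thesis
    using subspace_linear_relations n
    by (intro exI[of _ "linear_relations m ?u"]) (auto simp: linear_relations_def)
qed

end
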